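(* Let $m$ be a number and $p\ge 0$ an integer, and suppose the ball $\langle m;-\frac{1}{2^p}\rangle$ is balanced. Then $\langle m;-\frac{1}{2^p}\rangle\mathbin{:}\underline{0}\triangleq\langle m;-\frac{1}{2^{p+1}}\rangle$, and $\langle m;-\frac{1}{2^{p+1}}\rangle$ is also balanced.
   Context: Games are short normal-play combinatorial games, written $\{L\mid R\}$, with disjunctive sum $G+H\cong\{L(G)+H,G+L(H)\mid R(G)+H,G+R(H)\}$ and negation $-G\cong\{-R(G)\mid-L(G)\}$. Ordinal sum: $G\mathbin{:}H\cong\{L(G),\,G\mathbin{:}L(H)\mid R(G),\,G\mathbin{:}R(H)\}$. A number is a game with $G^L<G<G^R$ for all options; values are dyadic rationals. For numbers $m,\Delta$, the ball $\langle m;\Delta\rangle$ is the game $\{x\mid y\}$ with $x,y$ the canonical forms of $m+\Delta$, $m-\Delta$; it is balanced if $\langle m;\Delta\rangle+\langle m;\Delta\rangle=m+m$. $\underline{0}$ is the literal game $1+(-1)\cong\{-1\mid 1\}$ (canonical $1\cong\{0\mid\}$, $-1\cong\{\mid 0\}$). Equivalence modulo domination: $G\triangleq H$ means that in $G+(-H)$, for every move by either player as first player in one summand, the other player has a response in the other summand after which the responder wins. *)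

theory Defs
  imports Main "HOL.Rat"
begin

text \<open>A game form {L | R}; options are given as finite lists (order is irrelevant,
  all notions below only use the sets of options).\<close>
datatype game = Game "game list" "game list"

fun LO :: "game \<Rightarrow> game list" where "LO (Game l r) = l"
fun RO :: "game \<Rightarrow> game list" where "RO (Game l r) = r"

fun gneg :: "game \<Rightarrow> game" where
  "gneg (Game l r) = Game (map gneg r) (map gneg l)"

function gsum :: "game \<Rightarrow> game \<Rightarrow> game" where
  "gsum (Game gl gr) (Game hl hr) =
     Game (map (\<lambda>x. gsum x (Game hl hr)) gl @ map (\<lambda>y. gsum (Game gl gr) y) hl)
          (map (\<lambda>x. gsum x (Game hl hr)) gr @ map (\<lambda>y. gsum (Game gl gr) y) hr)"
  by pat_completeness auto
termination
  by (relation "measure (\<lambda>(g, h). size g + size h)")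
     (auto, (metis le_imp_less_Suc le_refl size_list_estimation' trans_le_add1 trans_le_add2)+)

fun osum :: "game \<Rightarrow> game \<Rightarrow> game" where
  "osum g (Game hl hr) = Game (LO g @ map (osum g) hl) (RO g @ map (osum g) hr)"

text \<open>Normal play: \<open>wins True G\<close> means Left, moving first in G, has a winning
  strategy; \<open>wins False G\<close> the same for Right.\<close>
fun wins :: "bool \<Rightarrow> game \<Rightarrow> bool" where
  "wins True (Game l r) = (\<exists>x\<in>set l. \<not> wins False x)"
| "wins False (Game l r) = (\<exists>x\<in>set r. \<not> wins True x)"

definition gge :: "game \<Rightarrow> game \<Rightarrow> bool" where
  "gge g h \<longleftrightarrow> \<not> wins False (gsum g (gneg h))"

definition geq :: "game \<Rightarrow> game \<Rightarrow> bool" where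
  "geq g h \<longleftrightarrow> gge g h \<and> gge h g"

definition dyadic :: "rat \<Rightarrow> bool" where
  "dyadic q \<longleftrightarrow> (\<exists>a::int. \<exists>k::nat. q = of_int a / 2 ^ k)"

fun natg :: "nat \<Rightarrow> game" where
  "natg 0 = Game [] []"
| "natg (Suc n) = Game [natg n] []"

definition intg :: "int \<Rightarrow> game" where
  "intg a = (if a \<ge> 0 then natg (nat a) else gneg (natg (nat (- a))))"

text \<open>\<open>dyg a k\<close> is the canonical form of a/2^k: for odd a and k \<ge> 1 it is
  {(a-1)/2^k | (a+1)/2^k} (in canonical form).\<close>
fun dyg :: "int \<Rightarrow> nat \<Rightarrow> game" where
  "dyg a 0 = intg a"
| "dyg a (Suc k) = (if even a then dyg (a div 2) k
                    else Game [dyg ((a - 1) div 2) k] [dyg ((a + 1) div 2) k])"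

definition canon :: "rat \<Rightarrow> game" where
  "canon q = (let k = (LEAST k::nat. \<exists>a::int. q = of_int a / 2 ^ k)
              in dyg \<lfloor>q * 2 ^ k\<rfloor> k)"

definition ball :: "rat \<Rightarrow> rat \<Rightarrow> game" where
  "ball m d = Game [canon (m + d)] [canon (m - d)]"

definition balanced :: "rat \<Rightarrow> rat \<Rightarrow> bool" where
  "balanced m d \<longleftrightarrow> geq (gsum (ball m d) (ball m d)) (gsum (canon m) (canon m))"

text \<open>The literal game 1 + (-1) (which is {-1 | 1}).\<close>
definition zero_u :: game where
  "zero_u = gsum (canon 1) (gneg (canon 1))"

text \<open>G \<triangleq> H: in G + (-H), every first move by either player in one summand has an
  answer by the other player in the other summand after which the responder wins
  (i.e. the player to move next, moving first, loses).  Note L(-H) = -R(H) and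
  R(-H) = -L(H).\<close>
definition dom_equiv :: "game \<Rightarrow> game \<Rightarrow> bool" where
  "dom_equiv g h \<longleftrightarrow>
     (\<forall>gl\<in>set (LO g). \<exists>hl\<in>set (LO h). \<not> wins True (gsum gl (gneg hl))) \<and>
     (\<forall>hr\<in>set (RO h). \<exists>gr\<in>set (RO g). \<not> wins True (gsum gr (gneg hr))) \<and>
     (\<forall>gr\<in>set (RO g). \<exists>hr\<in>set (RO h). \<not> wins False (gsum gr (gneg hr))) \<and>
     (\<forall>hl\<in>set (LO h). \<exists>gl\<in>set (LO g). \<not> wins False (gsum gl (gneg hl)))"

end

theory Submission
  imports Defs
begin

text \<open>
  Write \<open>D\<^sub>p\<close> for the multiples of \<open>1/2^p\<close>. If \<open>m \<in> D\<^sub>p\<close>, the options of the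
  canonical form of \<open>m\<close> lie outside the open interval \<open>(m - 1/2^p, m + 1/2^p)\<close>, so by the
  simplicity theorem the ball \<open>{m - 1/2^p | m + 1/2^p}\<close> equals \<open>m\<close> and is balanced. If
  \<open>m \<notin> D\<^sub>p\<close>, the interval contains a simpler dyadic \<open>c \<noteq> m\<close>, the ball equals \<open>c\<close>,
  and balance would force \<open>c + c = m + m\<close>, i.e. \<open>c = m\<close>. So the hypothesis says
  \<open>m \<in> D\<^sub>p \<subseteq> D\<^sub>p\<^sub>+\<^sub>1\<close>, which gives balance at \<open>p + 1\<close>.

  With \<open>A, B, M\<close> the canonical forms of \<open>m - 1/2^p, m + 1/2^p, m\<close> and \<open>G = {A | B} = M\<close>,
  the canonical forms of \<open>m \<mp> 1/2^(p+1)\<close> are \<open>{A | M}\<close> and \<open>{M | B}\<close>, while the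
  ordinal sum of \<open>G\<close> with the literal zero is \<open>{A, {A | B, G} | B, {A, G | B}}\<close>. Its options
  \<open>{A | B, G}\<close> and \<open>{A, G | B}\<close> equal \<open>{A | M}\<close> and \<open>{M | B}\<close>, and its options
  \<open>A < {A | M}\<close> and \<open>B > {M | B}\<close> are dominated.
\<close>

section \<open>Order and sums of games\<close>

lemma size_LO_less: "x \<in> set (LO g) \<Longrightarrow> size x < size g"
  by (cases g) (auto simp: less_Suc_eq_le intro: size_list_estimation' trans_le_add1)

lemma size_RO_less: "x \<in> set (RO g) \<Longrightarrow> size x < size g"
  by (cases g) (auto simp: less_Suc_eq_le intro: size_list_estimation' trans_le_add2)

lemma LO_gsum: "LO (gsum g h) = map (\<lambda>x. gsum x h) (LO g) @ map (gsum g) (LO h)"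
  by (cases g; cases h) auto

lemma RO_gsum: "RO (gsum g h) = map (\<lambda>x. gsum x h) (RO g) @ map (gsum g) (RO h)"
  by (cases g; cases h) auto

lemma wins_True_iff: "wins True g \<longleftrightarrow> (\<exists>x\<in>set (LO g). \<not> wins False x)"
  by (cases g) auto

lemma wins_False_iff: "wins False g \<longleftrightarrow> (\<exists>x\<in>set (RO g). \<not> wins True x)"
  by (cases g) auto

lemma gneg_gneg [simp]: "gneg (gneg g) = g"
  by (induction g) (auto simp: map_idI)

lemma gneg_gsum: "gneg (gsum g h) = gsum (gneg g) (gneg h)"
  by (induction g h rule: gsum.induct) auto

lemma wins_gneg: "wins b (gneg g) = wins (\<not> b) g"
  by (induction g arbitrary: b) (case_tac b; auto)+

lemma wins_gsum_commute: "wins b (gsum x y) = wins b (gsum y x)"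
proof (induction "size x + size y" arbitrary: x y b rule: less_induct)
  case less
  have x: "wins c (gsum u y) = wins c (gsum y u)" if "size u < size x" for u c
    using less that by simp
  have y: "wins c (gsum x u) = wins c (gsum u x)" if "size u < size y" for u c
    using less that by simp
  show ?case
  proof (cases b)
    case True
    have "wins True (gsum x y) =
        ((\<exists>u\<in>set (LO x). \<not> wins False (gsum u y)) \<or> (\<exists>u\<in>set (LO y). \<not> wins False (gsum x u)))"
      by (auto simp: wins_True_iff LO_gsum)
    also have "\<dots> =
        ((\<exists>u\<in>set (LO x). \<not> wins False (gsum y u)) \<or> (\<exists>u\<in>set (LO y). \<not> wins False (gsum u x)))"
      using x[OF size_LO_less] y[OF size_LO_less] by (intro arg_cong2[where f = "(\<or>)"] bex_cong) auto
    also have "\<dots> = wins True (gsum y x)"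
      by (auto simp: wins_True_iff LO_gsum)
    finally show ?thesis using True by simp
  next
    case False
    have "wins False (gsum x y) =
        ((\<exists>u\<in>set (RO x). \<not> wins True (gsum u y)) \<or> (\<exists>u\<in>set (RO y). \<not> wins True (gsum x u)))"
      by (auto simp: wins_False_iff RO_gsum)
    also have "\<dots> =
        ((\<exists>u\<in>set (RO x). \<not> wins True (gsum y u)) \<or> (\<exists>u\<in>set (RO y). \<not> wins True (gsum u x)))"
      using x[OF size_RO_less] y[OF size_RO_less] by (intro arg_cong2[where f = "(\<or>)"] bex_cong) auto
    also have "\<dots> = wins False (gsum y x)"
      by (auto simp: wins_False_iff RO_gsum)
    finally show ?thesis using False by simp
  qed
qed

lemma not_wins_True_gsum_gneg: "\<not> wins True (gsum x (gneg y)) \<longleftrightarrow> gge y x"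
proof -
  have "wins True (gsum x (gneg y)) = wins False (gneg (gsum x (gneg y)))"
    by (simp add: wins_gneg)
  also have "\<dots> = wins False (gsum y (gneg x))"
    by (simp add: gneg_gsum wins_gsum_commute)
  finally show ?thesis by (simp add: gge_def)
qed

lemma gge_iff_Conway:
  "gge g h \<longleftrightarrow> (\<forall>r\<in>set (RO g). \<not> gge h r) \<and> (\<forall>l\<in>set (LO h). \<not> gge l g)"
proof -
  have "gge g h \<longleftrightarrow> (\<forall>x\<in>set (RO (gsum g (gneg h))). wins True x)"
    by (simp add: gge_def wins_False_iff)
  also have "\<dots> \<longleftrightarrow> (\<forall>r\<in>set (RO g). wins True (gsum r (gneg h))) \<and>
                      (\<forall>l\<in>set (LO h). wins True (gsum g (gneg l)))"
    by (cases h) (auto simp: RO_gsum)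
  finally show ?thesis by (simp add: not_wins_True_gsum_gneg[symmetric])
qed

lemma not_gge_if_RO_le: "r \<in> set (RO g) \<Longrightarrow> gge h r \<Longrightarrow> \<not> gge g h"
  by (subst gge_iff_Conway) blast

lemma not_gge_if_LO_ge: "l \<in> set (LO h) \<Longrightarrow> gge l g \<Longrightarrow> \<not> gge g h"
  by (subst gge_iff_Conway) blast

lemma gge_refl: "gge g g"
proof (induction g)
  case (Game l r)
  show ?case
  proof (subst gge_iff_Conway, intro conjI ballI notI)
    fix x assume "x \<in> set (RO (Game l r))" and "gge (Game l r) x"
    then show False using Game(2) not_gge_if_RO_le by fastforce
  next
    fix x assume "x \<in> set (LO (Game l r))" and "gge x (Game l r)"
    then show False using Game(1) not_gge_if_LO_ge by fastforce
  qed
qed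

lemma not_gge_RO: "r \<in> set (RO g) \<Longrightarrow> \<not> gge g r"
  using not_gge_if_RO_le gge_refl by blast

lemma not_gge_LO: "l \<in> set (LO g) \<Longrightarrow> \<not> gge l g"
  using not_gge_if_LO_ge gge_refl by blast

lemma gge_trans: "gge g h \<Longrightarrow> gge h k \<Longrightarrow> gge g k"
proof (induction "size g + size h + size k" arbitrary: g h k rule: less_induct)
  case less
  show ?case
  proof (subst gge_iff_Conway, intro conjI ballI notI)
    fix r assume r: "r \<in> set (RO g)" and "gge k r"
    with less(1)[of h k r] less(3) size_RO_less[OF r] have "gge h r" by auto
    with less(2) r show False using not_gge_if_RO_le by blast
  next
    fix l assume l: "l \<in> set (LO k)" and "gge l g"
    with less(1)[of l g h] less(2) size_LO_less[OF l] have "gge l h" by auto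
    with less(3) l show False using not_gge_if_LO_ge by blast
  qed
qed

lemma gge_gsum_right_mono_step:
  assumes IH: "\<And>g' h' k'. size g' + size h' + size k' < size g + size h + size k \<Longrightarrow>
                 gge (gsum g' k') (gsum h' k') \<longleftrightarrow> gge g' h'"
    and ge: "gge g h"
  shows "gge (gsum g k) (gsum h k)"
proof (subst gge_iff_Conway, intro conjI ballI notI)
  fix r assume r: "r \<in> set (RO (gsum g k))" and hr: "gge (gsum h k) r"
  from r consider (g) gr where "gr \<in> set (RO g)" "r = gsum gr k"
    | (k) kr where "kr \<in> set (RO k)" "r = gsum g kr" by (auto simp: RO_gsum)
  then show False
  proof cases
    case g
    with IH[of h gr k] size_RO_less[OF g(1)] hr have "gge h gr" by auto
    with ge g(1) show False using not_gge_if_RO_le by blast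
  next
    case k
    with IH[of g h kr] size_RO_less[OF k(1)] ge have "gge (gsum g kr) (gsum h kr)" by auto
    with hr k have "gge (gsum h k) (gsum h kr)" using gge_trans by blast
    moreover have "gsum h kr \<in> set (RO (gsum h k))" using k by (auto simp: RO_gsum)
    ultimately show False using not_gge_RO by blast
  qed
next
  fix l assume l: "l \<in> set (LO (gsum h k))" and hl: "gge l (gsum g k)"
  from l consider (h) hl where "hl \<in> set (LO h)" "l = gsum hl k"
    | (k) kl where "kl \<in> set (LO k)" "l = gsum h kl" by (auto simp: LO_gsum)
  then show False
  proof cases
    case h
    with IH[of hl g k] size_LO_less[OF h(1)] hl have "gge hl g" by auto
    with ge h(1) show False using not_gge_if_LO_ge by blast
  next
    case k
    with IH[of g h kl] size_LO_less[OF k(1)] ge have "gge (gsum g kl) (gsum h kl)" by auto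
    with hl k have "gge (gsum g kl) (gsum g k)" using gge_trans by blast
    moreover have "gsum g kl \<in> set (LO (gsum g k))" using k by (auto simp: LO_gsum)
    ultimately show False using not_gge_LO by blast
  qed
qed

lemma gge_gsum_right_cancel_step:
  assumes IH: "\<And>g' h' k'. size g' + size h' + size k' < size g + size h + size k \<Longrightarrow>
                 gge (gsum g' k') (gsum h' k') \<longleftrightarrow> gge g' h'"
    and ge: "gge (gsum g k) (gsum h k)"
  shows "gge g h"
proof (subst gge_iff_Conway, intro conjI ballI notI)
  fix r assume r: "r \<in> set (RO g)" and "gge h r"
  with IH[of h r k] size_RO_less[OF r] have "gge (gsum h k) (gsum r k)" by auto
  moreover have "gsum r k \<in> set (RO (gsum g k))" using r by (auto simp: RO_gsum)
  ultimately show False using ge not_gge_if_RO_le by blast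
next
  fix l assume l: "l \<in> set (LO h)" and "gge l g"
  with IH[of l g k] size_LO_less[OF l] have "gge (gsum l k) (gsum g k)" by auto
  moreover have "gsum l k \<in> set (LO (gsum h k))" using l by (auto simp: LO_gsum)
  ultimately show False using ge not_gge_if_LO_ge by blast
qed

lemma gge_gsum_right_iff: "gge (gsum g k) (gsum h k) \<longleftrightarrow> gge g h"
proof (induction "size g + size h + size k" arbitrary: g h k rule: less_induct)
  case less
  have IH: "gge (gsum g' k') (gsum h' k') \<longleftrightarrow> gge g' h'"
    if "size g' + size h' + size k' < size g + size h + size k" for g' h' k'
    using less that by blast
  show ?case
    using gge_gsum_right_mono_step[OF IH] gge_gsum_right_cancel_step[OF IH] by blast
qed

lemma gge_gsum_commute: "gge (gsum x y) (gsum y x)"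
proof (induction "size x + size y" arbitrary: x y rule: less_induct)
  case less
  have IH: "gge (gsum x' y') (gsum y' x')" if "size x' + size y' < size x + size y" for x' y'
    using less that by blast
  show ?case
  proof (subst gge_iff_Conway, intro conjI ballI notI)
    fix r assume r: "r \<in> set (RO (gsum x y))" and "gge (gsum y x) r"
    moreover from r obtain r' where "r' \<in> set (RO (gsum y x))" "gge r r'"
      using IH size_RO_less by (fastforce simp: RO_gsum)
    ultimately show False using gge_trans not_gge_RO by blast
  next
    fix l assume l: "l \<in> set (LO (gsum y x))" and "gge l (gsum x y)"
    moreover from l obtain l' where "l' \<in> set (LO (gsum x y))" "gge l' l"
      using IH size_LO_less by (fastforce simp: LO_gsum)
    ultimately show False using gge_trans not_gge_LO by blast
  qed
qed

lemma gge_gsum_left_iff: "gge (gsum k g) (gsum k h) \<longleftrightarrow> gge g h"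
  by (meson gge_gsum_commute gge_gsum_right_iff gge_trans)

lemma gge_gsum_mono: "gge a b \<Longrightarrow> gge c d \<Longrightarrow> gge (gsum a c) (gsum b d)"
  by (meson gge_gsum_left_iff gge_gsum_right_iff gge_trans)

lemma geq_sym: "geq g h \<Longrightarrow> geq h g"
  by (simp add: geq_def)

lemma geq_trans: "geq g h \<Longrightarrow> geq h k \<Longrightarrow> geq g k"
  unfolding geq_def using gge_trans by blast

lemma geq_gsum: "geq a b \<Longrightarrow> geq c d \<Longrightarrow> geq (gsum a c) (gsum b d)"
  unfolding geq_def using gge_gsum_mono by blast

lemma geq_double_cancel:
  assumes "geq (gsum a a) (gsum b b)" and "gge a b \<or> gge b a"
  shows "geq a b"
  using assms(2)
proof
  assume "gge a b"
  then have "gge (gsum a a) (gsum a b)" by (simp add: gge_gsum_left_iff)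
  then have "gge (gsum b b) (gsum a b)" using assms(1) gge_trans unfolding geq_def by blast
  then show "geq a b" using \<open>gge a b\<close> by (simp add: geq_def gge_gsum_right_iff)
next
  assume "gge b a"
  then have "gge (gsum b a) (gsum a a)" by (simp add: gge_gsum_right_iff)
  then have "gge (gsum b a) (gsum b b)" using assms(1) gge_trans unfolding geq_def by blast
  then show "geq a b" using \<open>gge b a\<close> by (simp add: geq_def gge_gsum_left_iff)
qed

lemma dom_equiv_iff_gge:
  "dom_equiv g h \<longleftrightarrow>
     (\<forall>gl\<in>set (LO g). \<exists>hl\<in>set (LO h). gge hl gl) \<and>
     (\<forall>hr\<in>set (RO h). \<exists>gr\<in>set (RO g). gge hr gr) \<and>
     (\<forall>gr\<in>set (RO g). \<exists>hr\<in>set (RO h). gge gr hr) \<and>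
     (\<forall>hl\<in>set (LO h). \<exists>gl\<in>set (LO g). gge gl hl)"
  by (simp add: dom_equiv_def not_wins_True_gsum_gneg flip: gge_def)

lemma zero_u_eq: "zero_u = Game [Game [] [Game [] []]] [Game [Game [] []] []]"
proof -
  have "(LEAST k::nat. \<exists>a::int. (1::rat) = of_int a / 2 ^ k) = 0"
    by (rule Least_eq_0) (auto intro: exI[of _ 1])
  then have "canon 1 = Game [Game [] []] []"
    by (simp add: canon_def intg_def)
  then show ?thesis by (simp add: zero_u_def)
qed

lemma osum_zero_u:
  "osum g zero_u = Game (LO g @ [Game (LO g) (RO g @ [g])]) (RO g @ [Game (LO g @ [g]) (RO g)])"
  by (cases g) (simp add: zero_u_eq)

lemma dom_equiv_osum_zero_u:
  fixes a b m :: game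
  defines "a' \<equiv> Game [a] [m]" and "b' \<equiv> Game [m] [b]"
  assumes "geq (Game [a] [b]) m"
    and "gge a' a" and "\<not> gge a a'" and "\<not> gge a' b"
    and "gge b b'" and "\<not> gge b' b" and "\<not> gge a b'"
  shows "dom_equiv (osum (Game [a] [b]) zero_u) (Game [a'] [b'])"
proof -
  define g where "g = Game [a] [b]"
  \<comment> \<open>\<open>p\<close> and \<open>q\<close> are the ordinal sums of \<open>g\<close> with \<open>-1\<close> and \<open>1\<close>\<close>
  define p where "p = Game [a] [b, g]"
  define q where "q = Game [a, g] [b]"
  have osum: "osum g zero_u = Game [a, p] [b, q]"
    by (simp add: osum_zero_u g_def p_def q_def)
  have gm: "gge g m" "gge m g"
    using assms(3) by (simp_all add: g_def geq_def)
  have "gge p a'"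
    using assms(6) not_gge_if_RO_le[of m a' g] not_gge_LO[of a p] gm
    by (subst gge_iff_Conway) (simp add: p_def a'_def)
  moreover have "gge a' p"
    using assms(5) not_gge_if_RO_le[of g p m] gm
    by (subst gge_iff_Conway) (simp add: p_def a'_def)
  moreover have "gge q b'"
    using assms(8) not_gge_if_LO_ge[of g q m] gm
    by (subst gge_iff_Conway) (simp add: q_def b'_def)
  moreover have "gge b' q"
    using assms(9) not_gge_if_LO_ge[of m b' g] not_gge_RO[of b q] gm
    by (subst gge_iff_Conway) (simp add: q_def b'_def)
  ultimately show ?thesis
    using assms(4,7) by (auto simp: dom_equiv_iff_gge osum simp flip: g_def)
qed

section \<open>Canonical forms of dyadic rationals\<close>

definition dyadic_grid :: "nat \<Rightarrow> rat set" where
  "dyadic_grid j = {q. \<exists>a::int. q = of_int a / 2 ^ j}"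

definition dyadic_exp :: "rat \<Rightarrow> nat" where
  "dyadic_exp q = (LEAST j. q \<in> dyadic_grid j)"

lemma dyadic_iff_grid: "dyadic q \<longleftrightarrow> (\<exists>j. q \<in> dyadic_grid j)"
  unfolding dyadic_def dyadic_grid_def by blast

lemma dyadic_grid_mono:
  assumes "q \<in> dyadic_grid j" and "j \<le> k"
  shows "q \<in> dyadic_grid k"
proof -
  obtain a where a: "q = of_int a / 2 ^ j"
    using assms(1) by (auto simp: dyadic_grid_def)
  have "(2::rat) ^ k = 2 ^ j * 2 ^ (k - j)"
    using assms(2) by (simp flip: power_add)
  then have "q = of_int (a * 2 ^ (k - j)) / 2 ^ k"
    using a by simp
  then show ?thesis unfolding dyadic_grid_def by blast
qed

lemma dyadic_grid_dyadic_exp: "dyadic q \<Longrightarrow> q \<in> dyadic_grid (dyadic_exp q)"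
  unfolding dyadic_iff_grid dyadic_exp_def by (rule LeastI_ex)

lemma dyadic_exp_le: "q \<in> dyadic_grid j \<Longrightarrow> dyadic_exp q \<le> j"
  unfolding dyadic_exp_def by (rule Least_le)

lemma mem_dyadic_grid_iff: "dyadic q \<Longrightarrow> q \<in> dyadic_grid j \<longleftrightarrow> dyadic_exp q \<le> j"
  using dyadic_grid_mono dyadic_grid_dyadic_exp dyadic_exp_le by blast

lemma dyadic_grid_times_pow: "q \<in> dyadic_grid j \<Longrightarrow> q * 2 ^ j = of_int \<lfloor>q * 2 ^ j\<rfloor>"
  by (auto simp: dyadic_grid_def)

lemma dyadic_grid_add: "q \<in> dyadic_grid j \<Longrightarrow> r \<in> dyadic_grid j \<Longrightarrow> q + r \<in> dyadic_grid j"
  by (auto simp: dyadic_grid_def add_divide_distrib[symmetric] intro: exI[of _ "_ + _"])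

lemma dyadic_grid_diff: "q \<in> dyadic_grid j \<Longrightarrow> r \<in> dyadic_grid j \<Longrightarrow> q - r \<in> dyadic_grid j"
  by (auto simp: dyadic_grid_def diff_divide_distrib[symmetric] intro: exI[of _ "_ - _"])

lemma of_int_mem_dyadic_grid: "of_int a \<in> dyadic_grid j"
proof -
  have "(of_int a :: rat) = of_int (a * 2 ^ j) / 2 ^ j"
    by simp
  then show ?thesis
    unfolding dyadic_grid_def by blast
qed

lemma inverse_pow_mem_dyadic_grid: "j \<le> k \<Longrightarrow> 1 / 2 ^ j \<in> dyadic_grid k"
  using dyadic_grid_mono[of "1 / 2 ^ j" j k] by (auto simp: dyadic_grid_def intro: exI[of _ 1])

lemma inverse_pow_Suc_notin_dyadic_grid: "1 / 2 ^ Suc p \<notin> dyadic_grid p"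
proof
  assume "1 / 2 ^ Suc p \<in> dyadic_grid p"
  then obtain a where "(1::rat) / 2 ^ Suc p = of_int a / 2 ^ p"
    by (auto simp: dyadic_grid_def)
  then have "(1::rat) = of_int (2 * a)"
    by (simp add: field_simps)
  then have "1 = 2 * a"
    by linarith
  then show False by presburger
qed

lemma dyadic_grid_step:
  assumes "q \<in> dyadic_grid k" and "r \<in> dyadic_grid k" and "q < r"
  shows "q + 1 / 2 ^ k \<le> r"
proof -
  obtain a b where a: "q = of_int a / 2 ^ k" and b: "r = of_int b / 2 ^ k"
    using assms(1,2) by (auto simp: dyadic_grid_def)
  then have "a < b"
    using assms(3) by (simp add: divide_less_cancel)
  then have "(of_int (a + 1) :: rat) / 2 ^ k \<le> of_int b / 2 ^ k"
    by (intro divide_right_mono) simp_all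
  then show ?thesis
    using a b by (simp add: add_divide_distrib)
qed

lemma dyadic_add: "dyadic q \<Longrightarrow> dyadic r \<Longrightarrow> dyadic (q + r)"
  unfolding dyadic_iff_grid
  by (meson dyadic_grid_add dyadic_grid_mono max.cobounded1 max.cobounded2)

lemma dyadic_diff: "dyadic q \<Longrightarrow> dyadic r \<Longrightarrow> dyadic (q - r)"
  unfolding dyadic_iff_grid
  by (meson dyadic_grid_diff dyadic_grid_mono max.cobounded1 max.cobounded2)

lemma dyadic_inverse_pow: "dyadic (1 / 2 ^ j)"
  using dyadic_iff_grid inverse_pow_mem_dyadic_grid by blast

lemma dyg_times_pow: "dyg (a * 2 ^ n) (k + n) = dyg a k"
  by (induction n) simp_all

lemma canon_eq_dyg: "canon q = dyg \<lfloor>q * 2 ^ dyadic_exp q\<rfloor> (dyadic_exp q)"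
  by (simp add: canon_def dyadic_exp_def dyadic_grid_def Let_def)

lemma canon_dyg: "canon (of_int a / 2 ^ k) = dyg a k"
proof -
  define q where "q = (of_int a / 2 ^ k :: rat)"
  define e where "e = dyadic_exp q"
  define b where "b = \<lfloor>q * 2 ^ e\<rfloor>"
  have "q \<in> dyadic_grid k"
    by (auto simp: dyadic_grid_def q_def)
  then have ek: "e \<le> k" and qb: "q * 2 ^ e = of_int b"
    using dyadic_exp_le dyadic_grid_times_pow dyadic_grid_dyadic_exp dyadic_iff_grid
    unfolding e_def b_def by blast+
  have "(2::rat) ^ k = 2 ^ e * 2 ^ (k - e)"
    using ek by (simp flip: power_add)
  then have "of_int a = q * 2 ^ e * 2 ^ (k - e)"
    by (simp add: q_def)
  then have "(of_int a :: rat) = of_int (b * 2 ^ (k - e))"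
    using qb by simp
  then have "a = b * 2 ^ (k - e)"
    by (rule of_int_eq_iff[THEN iffD1])
  then have "dyg a k = dyg b e"
    using dyg_times_pow[of b "k - e" e] ek by simp
  moreover have "canon q = dyg b e"
    unfolding b_def e_def by (rule canon_eq_dyg)
  ultimately show ?thesis
    by (simp only: q_def)
qed

lemma canon_of_int: "canon (of_int a) = intg a"
  using canon_dyg[of a 0] by simp

definition canon_lvals :: "rat \<Rightarrow> rat list" where
  "canon_lvals q =
     (if dyadic_exp q = 0 then (if 0 < q then [q - 1] else []) else [q - 1 / 2 ^ dyadic_exp q])"

definition canon_rvals :: "rat \<Rightarrow> rat list" where
  "canon_rvals q =
     (if dyadic_exp q = 0 then (if q < 0 then [q + 1] else []) else [q + 1 / 2 ^ dyadic_exp q])"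

lemma intg_eq_Game:
  "intg a = Game (if 0 < a then [intg (a - 1)] else []) (if a < 0 then [intg (a + 1)] else [])"
proof -
  consider "0 < a" | "a = 0" | "a < 0" by linarith
  then show ?thesis
  proof cases
    case 1
    then have "nat a = Suc (nat (a - 1))" by simp
    with 1 show ?thesis by (simp add: intg_def)
  next
    case 3
    then have "nat (- a) = Suc (nat (- (a + 1)))" by simp
    with 3 show ?thesis by (simp add: intg_def)
  qed (simp add: intg_def)
qed

lemma canon_odd_dyadic:
  fixes a :: int and k :: nat
  assumes "odd a"
  defines "q \<equiv> of_int a / 2 ^ Suc k"
  shows "canon q = Game [canon (q - 1 / 2 ^ Suc k)] [canon (q + 1 / 2 ^ Suc k)]"
proof -
  have "of_int ((a - 1) div 2) = (of_int (a - 1) / 2 :: rat)"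
   and "of_int ((a + 1) div 2) = (of_int (a + 1) / 2 :: rat)"
    using assms(1) by (auto elim!: oddE)
  then have "of_int ((a - 1) div 2) / 2 ^ k = q - 1 / 2 ^ Suc k"
        and "of_int ((a + 1) div 2) / 2 ^ k = q + 1 / 2 ^ Suc k"
    by (simp_all add: q_def field_simps)
  moreover have "canon q = Game [dyg ((a - 1) div 2) k] [dyg ((a + 1) div 2) k]"
    using assms(1) canon_dyg[of a "Suc k"] by (simp add: q_def)
  ultimately show ?thesis
    using canon_dyg[of "(a - 1) div 2" k] canon_dyg[of "(a + 1) div 2" k] by simp
qed

lemma canon_eq_Game:
  assumes "dyadic q"
  shows "canon q = Game (map canon (canon_lvals q)) (map canon (canon_rvals q))"
proof -
  define k where "k = dyadic_exp q"
  define a where "a = \<lfloor>q * 2 ^ k\<rfloor>"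
  have qa: "q = of_int a / 2 ^ k"
    using dyadic_grid_times_pow[OF dyadic_grid_dyadic_exp[OF assms]] unfolding k_def a_def
    by (simp add: eq_divide_eq)
  show ?thesis
  proof (cases k)
    case 0
    then have "dyadic_exp q = 0"
      unfolding k_def .
    moreover from qa 0 have "q = of_int a"
      by simp
    ultimately show ?thesis
      using canon_of_int[of a] canon_of_int[of "a - 1"] canon_of_int[of "a + 1"] intg_eq_Game[of a]
      by (simp add: canon_lvals_def canon_rvals_def)
  next
    case (Suc k')
    have "odd a"
    proof
      assume "even a"
      then obtain c where "a = 2 * c" by blast
      then have "q \<in> dyadic_grid k'"
        using qa Suc by (auto simp: dyadic_grid_def)
      then show False
        using dyadic_exp_le k_def Suc by fastforce
    qed
    then have "canon q = Game [canon (q - 1 / 2 ^ k)] [canon (q + 1 / 2 ^ k)]"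
      using canon_odd_dyadic[of a k'] qa Suc by simp
    then show ?thesis
      using Suc by (simp add: canon_lvals_def canon_rvals_def flip: k_def)
  qed
qed

lemma canon_lvals_less: "x \<in> set (canon_lvals q) \<Longrightarrow> x < q"
  by (auto simp: canon_lvals_def split: if_splits)

lemma canon_rvals_greater: "y \<in> set (canon_rvals q) \<Longrightarrow> q < y"
  by (auto simp: canon_rvals_def split: if_splits)

lemma canon_lvals_dyadic: "dyadic q \<Longrightarrow> x \<in> set (canon_lvals q) \<Longrightarrow> dyadic x"
  using dyadic_diff dyadic_inverse_pow[of 0] dyadic_inverse_pow
  by (auto simp: canon_lvals_def split: if_splits)

lemma canon_rvals_dyadic: "dyadic q \<Longrightarrow> y \<in> set (canon_rvals q) \<Longrightarrow> dyadic y"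
  using dyadic_add dyadic_inverse_pow[of 0] dyadic_inverse_pow
  by (auto simp: canon_rvals_def split: if_splits)

lemma canon_lvals_le:
  assumes "c \<in> dyadic_grid j" and "x \<in> set (canon_lvals c)"
  shows "x \<le> c - 1 / 2 ^ j"
proof -
  have "dyadic_exp c \<le> j"
    using assms(1) by (rule dyadic_exp_le)
  then have "(1::rat) / 2 ^ j \<le> 1 / 2 ^ dyadic_exp c"
    by (intro divide_left_mono power_increasing) auto
  moreover have "(1::rat) / 2 ^ j \<le> 1"
    by simp
  ultimately show ?thesis
    using assms(2) by (auto simp: canon_lvals_def split: if_splits)
qed

lemma canon_rvals_ge:
  assumes "c \<in> dyadic_grid j" and "y \<in> set (canon_rvals c)"
  shows "c + 1 / 2 ^ j \<le> y"
proof -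
  have "dyadic_exp c \<le> j"
    using assms(1) by (rule dyadic_exp_le)
  then have "(1::rat) / 2 ^ j \<le> 1 / 2 ^ dyadic_exp c"
    by (intro divide_left_mono power_increasing) auto
  moreover have "(1::rat) / 2 ^ j \<le> 1"
    by simp
  ultimately show ?thesis
    using assms(2) by (auto simp: canon_rvals_def split: if_splits)
qed

lemma canon_vals_between:
  assumes "dyadic q" and "dyadic r" and "q < r"
  shows "(\<exists>y\<in>set (canon_rvals q). y \<le> r) \<or> (\<exists>x\<in>set (canon_lvals r). q \<le> x)"
proof -
  define k where "k = dyadic_exp q"
  define j where "j = dyadic_exp r"
  have q: "q \<in> dyadic_grid k" and r: "r \<in> dyadic_grid j"
    using dyadic_grid_dyadic_exp assms(1,2) by (simp_all add: k_def j_def)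
  consider "j < k" | "k \<le> j" "0 < j" | "k = 0" "j = 0"
    by linarith
  then show ?thesis
  proof cases
    case 1
    then have "q + 1 / 2 ^ k \<le> r"
      using dyadic_grid_step[OF q dyadic_grid_mono[OF r] assms(3)] by simp
    then show ?thesis
      using 1 by (simp add: canon_rvals_def flip: k_def)
  next
    case 2
    then have "q \<le> r - 1 / 2 ^ j"
      using dyadic_grid_step[OF dyadic_grid_mono[OF q] r assms(3)] by simp
    then show ?thesis
      using 2 by (simp add: canon_lvals_def flip: j_def)
  next
    case 3
    then have "q + 1 \<le> r"
      using dyadic_grid_step[OF q] r assms(3) by fastforce
    then show ?thesis
      using 3 by (simp add: canon_lvals_def canon_rvals_def flip: k_def j_def) linarith
  qed
qed

lemma size_canon_lvals_less:
  "dyadic q \<Longrightarrow> x \<in> set (canon_lvals q) \<Longrightarrow> size (canon x) < size (canon q)"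
  using size_LO_less[of "canon x" "canon q"] canon_eq_Game[of q] by simp

lemma size_canon_rvals_less:
  "dyadic q \<Longrightarrow> y \<in> set (canon_rvals q) \<Longrightarrow> size (canon y) < size (canon q)"
  using size_RO_less[of "canon y" "canon q"] canon_eq_Game[of q] by simp

lemma gge_canon_iff: "dyadic q \<Longrightarrow> dyadic r \<Longrightarrow> gge (canon q) (canon r) \<longleftrightarrow> r \<le> q"
proof (induction "size (canon q) + size (canon r)" arbitrary: q r rule: less_induct)
  case less
  have "gge (canon q) (canon r) \<longleftrightarrow>
      (\<forall>y\<in>set (canon_rvals q). \<not> gge (canon r) (canon y)) \<and>
      (\<forall>x\<in>set (canon_lvals r). \<not> gge (canon x) (canon q))"
    by (subst gge_iff_Conway) (simp add: canon_eq_Game[OF less(2)] canon_eq_Game[OF less(3)])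
  also have "\<dots> \<longleftrightarrow> (\<forall>y\<in>set (canon_rvals q). \<not> y \<le> r) \<and> (\<forall>x\<in>set (canon_lvals r). \<not> q \<le> x)"
  proof -
    have "\<forall>y\<in>set (canon_rvals q). gge (canon r) (canon y) \<longleftrightarrow> y \<le> r"
      using less size_canon_rvals_less canon_rvals_dyadic by fastforce
    moreover have "\<forall>x\<in>set (canon_lvals r). gge (canon x) (canon q) \<longleftrightarrow> q \<le> x"
      using less size_canon_lvals_less canon_lvals_dyadic by fastforce
    ultimately show ?thesis by simp
  qed
  also have "\<dots> \<longleftrightarrow> r \<le> q"
  proof
    assume "(\<forall>y\<in>set (canon_rvals q). \<not> y \<le> r) \<and> (\<forall>x\<in>set (canon_lvals r). \<not> q \<le> x)"
    then show "r \<le> q"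
      using canon_vals_between[OF less(2,3)] by (meson not_le)
  next
    assume "r \<le> q"
    then show "(\<forall>y\<in>set (canon_rvals q). \<not> y \<le> r) \<and> (\<forall>x\<in>set (canon_lvals r). \<not> q \<le> x)"
      using canon_rvals_greater canon_lvals_less by fastforce
  qed
  finally show ?case .
qed

lemma geq_canon_iff: "dyadic q \<Longrightarrow> dyadic r \<Longrightarrow> geq (canon q) (canon r) \<longleftrightarrow> q = r"
  by (auto simp: geq_def gge_canon_iff)

lemma geq_Game_canon_simplest:
  assumes "dyadic l" and "dyadic c" and "dyadic r" and "l < c" and "c < r"
    and "\<forall>x\<in>set (canon_lvals c). x \<le> l" and "\<forall>y\<in>set (canon_rvals c). r \<le> y"
  shows "geq (Game [canon l] [canon r]) (canon c)"
proof -
  define g where "g = Game [canon l] [canon r]"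
  have lvals: "gge (canon l) (canon x)" if "x \<in> set (canon_lvals c)" for x
    using that assms canon_lvals_dyadic gge_canon_iff by blast
  have rvals: "gge (canon y) (canon r)" if "y \<in> set (canon_rvals c)" for y
    using that assms canon_rvals_dyadic gge_canon_iff by blast
  have "gge g (canon c)"
  proof (subst gge_iff_Conway, intro conjI ballI)
    show "\<not> gge (canon c) x" if "x \<in> set (RO g)" for x
      using that assms by (simp add: g_def gge_canon_iff)
    show "\<not> gge x g" if "x \<in> set (LO (canon c))" for x
      using that lvals not_gge_if_LO_ge[of "canon l" g]
      by (auto simp: g_def canon_eq_Game[OF assms(2)])
  qed
  moreover have "gge (canon c) g"
  proof (subst gge_iff_Conway, intro conjI ballI)
    show "\<not> gge g x" if "x \<in> set (RO (canon c))" for x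
      using that rvals not_gge_if_RO_le[of "canon r" g]
      by (auto simp: g_def canon_eq_Game[OF assms(2)])
    show "\<not> gge x (canon c)" if "x \<in> set (LO g)" for x
      using that assms by (simp add: g_def gge_canon_iff)
  qed
  ultimately show ?thesis
    by (simp add: geq_def g_def)
qed

section \<open>Balls of negative radius\<close>

lemma ball_neg: "ball m (- d) = Game [canon (m - d)] [canon (m + d)]"
  by (simp add: ball_def)

lemma geq_ball_canon:
  assumes "m \<in> dyadic_grid p"
  shows "geq (ball m (- (1 / 2 ^ p))) (canon m)"
proof -
  have "1 / 2 ^ p \<in> dyadic_grid p"
    by (simp add: inverse_pow_mem_dyadic_grid)
  then have "m - 1 / 2 ^ p \<in> dyadic_grid p" and "m + 1 / 2 ^ p \<in> dyadic_grid p"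
    using assms dyadic_grid_diff dyadic_grid_add by blast+
  then show ?thesis
    using assms geq_Game_canon_simplest[of "m - 1 / 2 ^ p" m "m + 1 / 2 ^ p"]
      canon_lvals_le[OF assms] canon_rvals_ge[OF assms]
    by (simp add: ball_neg dyadic_iff_grid exI[of _ p])
qed

lemma balanced_if_mem_dyadic_grid: "m \<in> dyadic_grid p \<Longrightarrow> balanced m (- (1 / 2 ^ p))"
  unfolding balanced_def using geq_gsum geq_ball_canon by blast

lemma exists_dyadic_grid_near:
  assumes "m \<notin> dyadic_grid (Suc p)"
  shows "\<exists>c\<in>dyadic_grid p. c \<noteq> m \<and> \<bar>c - m\<bar> < 1 / 2 ^ Suc p"
proof -
  define t where "t = m * 2 ^ Suc p"
  define n where "n = \<lfloor>t\<rfloor>"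
  have "t \<noteq> of_int n"
    using assms by (auto simp: t_def dyadic_grid_def field_simps)
  then have n: "of_int n < t" "t < of_int n + 1"
    unfolding n_def by linarith+
  obtain e where "even e" and e: "e = n \<or> e = n + 1"
    by (metis even_add odd_one)
  then obtain h where h: "e = 2 * h"
    by blast
  define c where "c = (of_int e :: rat) / 2 ^ Suc p"
  have "of_int e \<noteq> t" and "\<bar>of_int e - t\<bar> < 1"
    using e n by auto
  then have "c \<noteq> m" and "\<bar>c - m\<bar> < 1 / 2 ^ Suc p"
    by (auto simp: c_def t_def field_simps abs_less_iff)
  moreover have "c = of_int h / 2 ^ p"
    by (simp add: c_def h)
  then have "c \<in> dyadic_grid p"
    by (auto simp: dyadic_grid_def)
  ultimately show ?thesis
    by blast
qed

lemma exists_simpler_dyadic: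
  assumes "m \<notin> dyadic_grid p"
  obtains c where "dyadic c" and "c \<noteq> m" and "m - 1 / 2 ^ p < c" and "c < m + 1 / 2 ^ p"
    and "\<forall>x\<in>set (canon_lvals c). x \<le> m - 1 / 2 ^ p"
    and "\<forall>y\<in>set (canon_rvals c). m + 1 / 2 ^ p \<le> y"
proof (cases p)
  \<comment> \<open>for \<open>p = 0\<close>, \<open>c\<close> is the integer next to \<open>m\<close> on the side of \<open>0\<close>\<close>
  case 0
  define n where "n = \<lfloor>m\<rfloor>"
  have "m \<noteq> of_int n"
    using assms 0 by (auto simp: dyadic_grid_def)
  then have n: "of_int n < m" "m < of_int n + 1"
    unfolding n_def by linarith+
  show ?thesis
  proof (cases "0 \<le> n")
    case True
    have "of_int n \<in> dyadic_grid 0" and "canon_rvals (of_int n) = []"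
      using True dyadic_exp_le of_int_mem_dyadic_grid[of n 0] by (auto simp: canon_rvals_def)
    then show ?thesis
      using that n 0 canon_lvals_le[of "of_int n" 0] by (fastforce simp: dyadic_iff_grid)
  next
    case False
    have "of_int (n + 1) \<in> dyadic_grid 0" and "canon_lvals (of_int (n + 1)) = []"
      using False dyadic_exp_le of_int_mem_dyadic_grid[of "n + 1" 0] by (auto simp: canon_lvals_def)
    then show ?thesis
      using that n 0 canon_rvals_ge[of "of_int (n + 1)" 0] by (fastforce simp: dyadic_iff_grid)
  qed
next
  case (Suc p')
  then obtain c where c: "c \<in> dyadic_grid p'" "c \<noteq> m" "\<bar>c - m\<bar> < 1 / 2 ^ p"
    using assms exists_dyadic_grid_near by blast
  have "(1::rat) / 2 ^ p' = 2 / 2 ^ p"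
    using Suc by simp
  then show ?thesis
    using that c canon_lvals_le[OF c(1)] canon_rvals_ge[OF c(1)] dyadic_iff_grid
    by (fastforce simp: abs_less_iff)
qed

lemma mem_dyadic_grid_if_balanced:
  assumes "dyadic m" and "balanced m (- (1 / 2 ^ p))"
  shows "m \<in> dyadic_grid p"
proof (rule ccontr)
  assume "m \<notin> dyadic_grid p"
  then obtain c where c: "dyadic c" "c \<noteq> m" "m - 1 / 2 ^ p < c" "c < m + 1 / 2 ^ p"
    "\<forall>x\<in>set (canon_lvals c). x \<le> m - 1 / 2 ^ p" "\<forall>y\<in>set (canon_rvals c). m + 1 / 2 ^ p \<le> y"
    by (rule exists_simpler_dyadic)
  have "dyadic (m - 1 / 2 ^ p)" and "dyadic (m + 1 / 2 ^ p)"
    using assms(1) dyadic_add dyadic_diff dyadic_inverse_pow by blast+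
  then have "geq (ball m (- (1 / 2 ^ p))) (canon c)"
    using geq_Game_canon_simplest c by (simp add: ball_neg)
  then have "geq (gsum (canon c) (canon c)) (gsum (canon m) (canon m))"
    using assms(2) geq_gsum geq_sym geq_trans unfolding balanced_def by meson
  then have "geq (canon c) (canon m)"
    using geq_double_cancel gge_canon_iff c(1) assms(1) by (meson linear)
  then show False
    using geq_canon_iff c(1,2) assms(1) by blast
qed

lemma balanced_iff_mem_dyadic_grid:
  "dyadic m \<Longrightarrow> balanced m (- (1 / 2 ^ p)) \<longleftrightarrow> m \<in> dyadic_grid p"
  using mem_dyadic_grid_if_balanced balanced_if_mem_dyadic_grid by blast

lemma canon_eq_Game_exp_Suc:
  assumes "q \<in> dyadic_grid (Suc p)" and "q \<notin> dyadic_grid p"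
  shows "canon q = Game [canon (q - 1 / 2 ^ Suc p)] [canon (q + 1 / 2 ^ Suc p)]"
proof -
  have "dyadic q"
    using assms(1) dyadic_iff_grid by blast
  moreover from this have "dyadic_exp q = Suc p"
    using assms mem_dyadic_grid_iff by (meson le_SucE)
  ultimately show ?thesis
    by (simp add: canon_eq_Game canon_lvals_def canon_rvals_def)
qed

lemma canon_half_step:
  assumes "m \<in> dyadic_grid p"
  shows "canon (m - 1 / 2 ^ Suc p) = Game [canon (m - 1 / 2 ^ p)] [canon m]"
    and "canon (m + 1 / 2 ^ Suc p) = Game [canon m] [canon (m + 1 / 2 ^ p)]"
proof -
  define e where "e = (1::rat) / 2 ^ Suc p"
  have "e + e = 1 / 2 ^ p"
    by (simp add: e_def field_simps)
  have e: "e \<in> dyadic_grid (Suc p)" "e \<notin> dyadic_grid p"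
    unfolding e_def using inverse_pow_mem_dyadic_grid inverse_pow_Suc_notin_dyadic_grid by blast+
  have m: "m \<in> dyadic_grid (Suc p)"
    using assms dyadic_grid_mono by simp
  have "m - e \<notin> dyadic_grid p" and "m + e \<notin> dyadic_grid p"
    using assms e(2) dyadic_grid_diff[of m p] dyadic_grid_diff[of _ p m] by force+
  moreover have "m - e \<in> dyadic_grid (Suc p)" and "m + e \<in> dyadic_grid (Suc p)"
    using m e(1) dyadic_grid_diff dyadic_grid_add by blast+
  ultimately have "canon (m - e) = Game [canon (m - e - e)] [canon (m - e + e)]"
    and "canon (m + e) = Game [canon (m + e - e)] [canon (m + e + e)]"
    using canon_eq_Game_exp_Suc[of _ p, folded e_def] by blast+
  moreover have "m - e - e = m - 1 / 2 ^ p" and "m + e + e = m + 1 / 2 ^ p"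
    using \<open>e + e = 1 / 2 ^ p\<close> by linarith+
  ultimately show "canon (m - e) = Game [canon (m - 1 / 2 ^ p)] [canon m]"
    and "canon (m + e) = Game [canon m] [canon (m + 1 / 2 ^ p)]"
    by simp_all
qed

lemma dom_equiv_osum_ball_zero_u:
  assumes "m \<in> dyadic_grid p"
  shows "dom_equiv (osum (ball m (- (1 / 2 ^ p))) zero_u) (ball m (- (1 / 2 ^ Suc p)))"
proof -
  define d where "d = (1::rat) / 2 ^ p"
  define e where "e = (1::rat) / 2 ^ Suc p"
  have "0 < e" and "e < d"
    by (simp_all add: d_def e_def field_simps)
  have "dyadic m"
    using assms dyadic_iff_grid by blast
  then have "dyadic (m - d)" "dyadic (m + d)" "dyadic (m - e)" "dyadic (m + e)"
    unfolding d_def e_def using dyadic_add dyadic_diff dyadic_inverse_pow by blast+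
  then have "gge (canon (m - e)) (canon (m - d))" "\<not> gge (canon (m - d)) (canon (m - e))"
    "\<not> gge (canon (m - e)) (canon (m + d))" "gge (canon (m + d)) (canon (m + e))"
    "\<not> gge (canon (m + e)) (canon (m + d))" "\<not> gge (canon (m - d)) (canon (m + e))"
    using \<open>0 < e\<close> \<open>e < d\<close> by (simp_all add: gge_canon_iff)
  moreover have "geq (Game [canon (m - d)] [canon (m + d)]) (canon m)"
    using geq_ball_canon[OF assms] by (simp add: ball_neg d_def)
  ultimately show ?thesis
    using dom_equiv_osum_zero_u[of "canon (m - d)" "canon (m + d)" "canon m"] canon_half_step[OF assms]
    by (simp add: ball_neg d_def e_def)
qed

theorem lemma3p3:
  fixes m :: rat and p :: nat
  assumes "dyadic m"
    and "balanced m (- (1 / 2 ^ p))"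
  shows "dom_equiv (osum (ball m (- (1 / 2 ^ p))) zero_u) (ball m (- (1 / 2 ^ Suc p)))
         \<and> balanced m (- (1 / 2 ^ Suc p))"
proof -
  have "m \<in> dyadic_grid p"
    using assms balanced_iff_mem_dyadic_grid by blast
  moreover from this have "m \<in> dyadic_grid (Suc p)"
    using dyadic_grid_mono by simp
  ultimately show ?thesis
    using dom_equiv_osum_ball_zero_u balanced_if_mem_dyadic_grid by blast
qed

end
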